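(* Let $k$ be an algebraically closed field of characteristic zero, $n\ge1$, $q\in k$ a primitive $2n$-th root of unity, $a\in k\setminus\{0\}$. Let $\mathfrak wH_{4n}$ be the algebra generated by $Z,X$ with relations $Z^{2n+1}=Z$, $ZX=qXZ$, $X^2=0$. Then $\mathfrak wH_{4n}$ is a noncommutative and noncocommutative weak Hopf algebra with comultiplication, counit and weak antipode $T$ determined by $\Delta(Z)=Z\otimes Z+a(1-q^{-2})Z^{n+1}X\otimes ZX$, $\Delta(X)=X\otimes 1+Z^n\otimes X$, $\epsilon(Z)=1$, $\epsilon(X)=0$, $T(Z)=Z^{2n-1}$, $T(X)=-Z^nX$ (with $\Delta,\epsilon$ algebra maps and $T$ an algebra anti-homomorphism).
   Context: A weak Hopf algebra (in the sense of Li) is a $k$-bialgebra $H$ together with a linear map $T\in\mathrm{Hom}(H,H)$ such that $T*\mathrm{id}*T=T$ and $\mathrm{id}*T*\mathrm{id}=\mathrm{id}$, where $*$ is the convolution product on $\mathrm{Hom}(H,H)$. *)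

theory Defs
  imports "HOL-Computational_Algebra.Polynomial"
begin

text \<open>A vector of the k-vector space with basis B is a coefficient function
  B -> k (extended by 0 outside B).  The tensor product of the spaces with bases
  B and C is the space with basis B x C.\<close>

definition vsp :: "'b set \<Rightarrow> ('b \<Rightarrow> 'k::zero) set" where
  "vsp B = {f. \<forall>x. x \<notin> B \<longrightarrow> f x = 0}"

definition bvec :: "'b \<Rightarrow> 'b \<Rightarrow> 'k::zero_neq_one" where
  "bvec b = (\<lambda>x. if x = b then 1 else 0)"

definition tprod :: "('b \<Rightarrow> 'k::times) \<Rightarrow> ('c \<Rightarrow> 'k) \<Rightarrow> ('b \<times> 'c \<Rightarrow> 'k)" where
  "tprod f g = (\<lambda>(x, y). f x * g y)"

definition linear_on :: "'b set \<Rightarrow> 'c set \<Rightarrow> (('b \<Rightarrow> 'k::comm_ring_1) \<Rightarrow> 'c \<Rightarrow> 'k) \<Rightarrow> bool" where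
  "linear_on B C L \<longleftrightarrow>
     (\<forall>f\<in>vsp B. L f \<in> vsp C) \<and>
     (\<forall>f\<in>vsp B. \<forall>g\<in>vsp B. L (\<lambda>x. f x + g x) = (\<lambda>y. L f y + L g y)) \<and>
     (\<forall>c. \<forall>f\<in>vsp B. L (\<lambda>x. c * f x) = (\<lambda>y. c * L f y))"

definition linear_fun :: "'b set \<Rightarrow> (('b \<Rightarrow> 'k::comm_ring_1) \<Rightarrow> 'k) \<Rightarrow> bool" where
  "linear_fun B e \<longleftrightarrow>
     (\<forall>f\<in>vsp B. \<forall>g\<in>vsp B. e (\<lambda>x. f x + g x) = e f + e g) \<and>
     (\<forall>c. \<forall>f\<in>vsp B. e (\<lambda>x. c * f x) = c * e f)"

definition tmap :: "'b set \<Rightarrow> 'b2 set \<Rightarrow> (('b \<Rightarrow> 'k::comm_ring_1) \<Rightarrow> 'c \<Rightarrow> 'k)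
    \<Rightarrow> (('b2 \<Rightarrow> 'k) \<Rightarrow> 'c2 \<Rightarrow> 'k) \<Rightarrow> ('b \<times> 'b2 \<Rightarrow> 'k) \<Rightarrow> ('c \<times> 'c2 \<Rightarrow> 'k)" where
  "tmap B B2 L M F = (\<lambda>(c, c2). \<Sum>(b, b2)\<in>B \<times> B2. F (b, b2) * L (bvec b) c * M (bvec b2) c2)"

definition mtens :: "'b set \<Rightarrow> (('b \<Rightarrow> 'k::comm_ring_1) \<Rightarrow> ('b \<Rightarrow> 'k) \<Rightarrow> 'b \<Rightarrow> 'k)
    \<Rightarrow> ('b \<times> 'b \<Rightarrow> 'k) \<Rightarrow> 'b \<Rightarrow> 'k" where
  "mtens B m F = (\<lambda>c. \<Sum>(b1, b2)\<in>B \<times> B. F (b1, b2) * m (bvec b1) (bvec b2) c)"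

definition tens_mult :: "'b set \<Rightarrow> (('b \<Rightarrow> 'k::comm_ring_1) \<Rightarrow> ('b \<Rightarrow> 'k) \<Rightarrow> 'b \<Rightarrow> 'k)
    \<Rightarrow> ('b \<times> 'b \<Rightarrow> 'k) \<Rightarrow> ('b \<times> 'b \<Rightarrow> 'k) \<Rightarrow> 'b \<times> 'b \<Rightarrow> 'k" where
  "tens_mult B m F G = (\<lambda>(c1, c2). \<Sum>(b1, b2)\<in>B \<times> B. \<Sum>(b1', b2')\<in>B \<times> B.
      F (b1, b2) * G (b1', b2') * m (bvec b1) (bvec b1') c1 * m (bvec b2) (bvec b2') c2)"

definition is_algebra :: "'b set \<Rightarrow> (('b \<Rightarrow> 'k::comm_ring_1) \<Rightarrow> ('b \<Rightarrow> 'k) \<Rightarrow> 'b \<Rightarrow> 'k)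
    \<Rightarrow> ('b \<Rightarrow> 'k) \<Rightarrow> bool" where
  "is_algebra B m u \<longleftrightarrow> finite B \<and> u \<in> vsp B \<and>
     (\<forall>g\<in>vsp B. linear_on B B (\<lambda>f. m f g)) \<and>
     (\<forall>f\<in>vsp B. linear_on B B (\<lambda>g. m f g)) \<and>
     (\<forall>f\<in>vsp B. \<forall>g\<in>vsp B. \<forall>h\<in>vsp B. m (m f g) h = m f (m g h)) \<and>
     (\<forall>f\<in>vsp B. m u f = f \<and> m f u = f)"

definition is_bialgebra :: "'b set \<Rightarrow> (('b \<Rightarrow> 'k::comm_ring_1) \<Rightarrow> ('b \<Rightarrow> 'k) \<Rightarrow> 'b \<Rightarrow> 'k)
    \<Rightarrow> ('b \<Rightarrow> 'k) \<Rightarrow> (('b \<Rightarrow> 'k) \<Rightarrow> 'b \<times> 'b \<Rightarrow> 'k) \<Rightarrow> (('b \<Rightarrow> 'k) \<Rightarrow> 'k) \<Rightarrow> bool" where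
  "is_bialgebra B m u \<Delta> \<epsilon> \<longleftrightarrow> is_algebra B m u \<and>
     linear_on B (B \<times> B) \<Delta> \<and> linear_fun B \<epsilon> \<and>
     \<comment> \<open>coassociativity: (Delta (x) id) Delta = (id (x) Delta) Delta\<close>
     (\<forall>h\<in>vsp B. (\<lambda>(x, y, z). tmap B B \<Delta> id (\<Delta> h) ((x, y), z)) = tmap B B id \<Delta> (\<Delta> h)) \<and>
     \<comment> \<open>counit: (eps (x) id) Delta = id = (id (x) eps) Delta\<close>
     (\<forall>h\<in>vsp B. (\<lambda>c. \<Sum>b\<in>B. \<epsilon> (bvec b) * \<Delta> h (b, c)) = h) \<and>
     (\<forall>h\<in>vsp B. (\<lambda>c. \<Sum>b\<in>B. \<Delta> h (c, b) * \<epsilon> (bvec b)) = h) \<and>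
     \<comment> \<open>Delta and eps are algebra maps\<close>
     (\<forall>f\<in>vsp B. \<forall>g\<in>vsp B. \<Delta> (m f g) = tens_mult B m (\<Delta> f) (\<Delta> g)) \<and> \<Delta> u = tprod u u \<and>
     (\<forall>f\<in>vsp B. \<forall>g\<in>vsp B. \<epsilon> (m f g) = \<epsilon> f * \<epsilon> g) \<and> \<epsilon> u = 1"

definition conv :: "'b set \<Rightarrow> (('b \<Rightarrow> 'k::comm_ring_1) \<Rightarrow> ('b \<Rightarrow> 'k) \<Rightarrow> 'b \<Rightarrow> 'k)
    \<Rightarrow> (('b \<Rightarrow> 'k) \<Rightarrow> 'b \<times> 'b \<Rightarrow> 'k) \<Rightarrow> (('b \<Rightarrow> 'k) \<Rightarrow> 'b \<Rightarrow> 'k)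
    \<Rightarrow> (('b \<Rightarrow> 'k) \<Rightarrow> 'b \<Rightarrow> 'k) \<Rightarrow> ('b \<Rightarrow> 'k) \<Rightarrow> 'b \<Rightarrow> 'k" where
  "conv B m \<Delta> f g = (\<lambda>h. mtens B m (tmap B B f g (\<Delta> h)))"

text \<open>Weak Hopf algebra in the sense of Li: bialgebra with T in Hom(H,H),
  T * id * T = T and id * T * id = id.\<close>
definition is_weak_hopf :: "'b set \<Rightarrow> (('b \<Rightarrow> 'k::comm_ring_1) \<Rightarrow> ('b \<Rightarrow> 'k) \<Rightarrow> 'b \<Rightarrow> 'k)
    \<Rightarrow> ('b \<Rightarrow> 'k) \<Rightarrow> (('b \<Rightarrow> 'k) \<Rightarrow> 'b \<times> 'b \<Rightarrow> 'k) \<Rightarrow> (('b \<Rightarrow> 'k) \<Rightarrow> 'k)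
    \<Rightarrow> (('b \<Rightarrow> 'k) \<Rightarrow> 'b \<Rightarrow> 'k) \<Rightarrow> bool" where
  "is_weak_hopf B m u \<Delta> \<epsilon> T \<longleftrightarrow> is_bialgebra B m u \<Delta> \<epsilon> \<and> linear_on B B T \<and>
     (\<forall>h\<in>vsp B. conv B m \<Delta> (conv B m \<Delta> T id) T h = T h) \<and>
     (\<forall>h\<in>vsp B. conv B m \<Delta> (conv B m \<Delta> id T) id h = h)"

fun apow :: "(('b \<Rightarrow> 'k) \<Rightarrow> ('b \<Rightarrow> 'k) \<Rightarrow> 'b \<Rightarrow> 'k) \<Rightarrow> ('b \<Rightarrow> 'k) \<Rightarrow> ('b \<Rightarrow> 'k) \<Rightarrow> nat \<Rightarrow> 'b \<Rightarrow> 'k" where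
  "apow m u f 0 = u"
| "apow m u f (Suc j) = m f (apow m u f j)"

text \<open>Concrete model: basis elements (i,j), 0 <= i <= 2n, 0 <= j <= 1, standing for
  the monomials Z^i X^j; multiplication
  Z^i X^j * Z^k X^l = q^(-jk) Z^(i+k) X^(j+l) (zero if j+l >= 2), with the exponent
  of Z reduced via Z^(2n+1) = Z.\<close>

definition wH_basis :: "nat \<Rightarrow> (nat \<times> nat) set" where
  "wH_basis n = {0..2 * n} \<times> {0..1}"

definition zred :: "nat \<Rightarrow> nat \<Rightarrow> nat" where
  "zred n e = (if e = 0 then 0 else (e - 1) mod (2 * n) + 1)"

definition wH_mult :: "nat \<Rightarrow> 'k::field \<Rightarrow> ((nat \<times> nat) \<Rightarrow> 'k) \<Rightarrow> ((nat \<times> nat) \<Rightarrow> 'k)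
    \<Rightarrow> (nat \<times> nat) \<Rightarrow> 'k" where
  "wH_mult n q f g = (\<lambda>c. \<Sum>(i, j)\<in>wH_basis n. \<Sum>(k, l)\<in>wH_basis n.
      if j + l \<le> 1 \<and> c = (zred n (i + k), j + l)
      then f (i, j) * g (k, l) * (inverse q) ^ (j * k) else 0)"

end

(*
  wH_4n is modelled on the basis Z^i X^j (i <= 2n, j <= 1), and Delta, eps and T are given by
  their values on this basis.  Every identity to be verified -- associativity and unit,
  coassociativity and counit, multiplicativity of Delta and eps, T being an anti-homomorphism,
  and T * id * T = T, id * T * id = id -- is multilinear, so it reduces to a finite computation
  on basis elements, in which exponents of Z are reduced by Z^(2n+1) = Z and powers of q by
  q^n = -1.  The weak antipode identities go through T * id and id * T: both send Z^i (i > 0)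
  to the idempotent Z^(2n) rather than to 1, and convolving once more restores T and id.
  Only q^n = -1 (and q ~= 1, for noncommutativity) is used.
*)

theory Submission
  imports Defs
begin

section \<open>Linear and bilinear maps given on a basis\<close>

definition lin_ext :: "'b set \<Rightarrow> ('b \<Rightarrow> 'c \<Rightarrow> 'k::comm_ring_1) \<Rightarrow> ('b \<Rightarrow> 'k) \<Rightarrow> 'c \<Rightarrow> 'k" where
  "lin_ext B K f = (\<lambda>c. \<Sum>b\<in>B. f b * K b c)"

definition bilin_ext ::
    "'b set \<Rightarrow> ('b \<Rightarrow> 'b \<Rightarrow> 'c \<Rightarrow> 'k::comm_ring_1) \<Rightarrow> ('b \<Rightarrow> 'k) \<Rightarrow> ('b \<Rightarrow> 'k) \<Rightarrow> 'c \<Rightarrow> 'k" where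
  "bilin_ext B K f g = (\<lambda>c. \<Sum>x\<in>B. \<Sum>y\<in>B. f x * g y * K x y c)"

lemma bvec_in_vsp: "b \<in> B \<Longrightarrow> (bvec b :: _ \<Rightarrow> 'k::comm_ring_1) \<in> vsp B"
  by (auto simp: vsp_def bvec_def)

lemma bvec_pair: "(bvec (u, v) (x, y) :: 'k::comm_ring_1) = bvec u x * bvec v y"
  by (simp add: bvec_def)

lemma tprod_bvec: "tprod (bvec u) (bvec v) = (bvec (u, v) :: _ \<Rightarrow> 'k::comm_ring_1)"
  by (auto simp: tprod_def bvec_def fun_eq_iff)

lemma sum_bvec_mult:
  assumes "finite B"
  shows "(\<Sum>c\<in>B. bvec b c * f c) = (if b \<in> B then f b else (0::'k::comm_ring_1))"
proof -
  have "(\<Sum>c\<in>B. bvec b c * f c) = (\<Sum>c\<in>B. if c = b then f b else 0)"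
    by (rule sum.cong) (auto simp: bvec_def)
  then show ?thesis using assms by (simp add: sum.delta')
qed

lemma lin_ext_add: "lin_ext B K (\<lambda>p. f p + g p) = (\<lambda>c. lin_ext B K f c + lin_ext B K g c)"
  by (simp add: lin_ext_def fun_eq_iff sum.distrib algebra_simps)

lemma lin_ext_diff: "lin_ext B K (\<lambda>p. f p - g p) = (\<lambda>c. lin_ext B K f c - lin_ext B K g c)"
  by (simp add: lin_ext_def fun_eq_iff sum_subtractf algebra_simps)

lemma lin_ext_neg: "lin_ext B K (\<lambda>p. - f p) = (\<lambda>c. - lin_ext B K f c)"
  by (simp add: lin_ext_def fun_eq_iff sum_negf)

lemma lin_ext_scale: "lin_ext B K (\<lambda>p. a * f p) = (\<lambda>c. a * lin_ext B K f c)"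
  by (simp add: lin_ext_def fun_eq_iff sum_distrib_left algebra_simps)

lemma lin_ext_zero: "lin_ext B K (\<lambda>p. 0) = (\<lambda>c. 0)"
  by (simp add: lin_ext_def)

lemma lin_ext_bvec: "finite B \<Longrightarrow> b \<in> B \<Longrightarrow> lin_ext B K (bvec b) = K b"
  by (simp add: lin_ext_def fun_eq_iff sum_bvec_mult)

lemmas lin_ext_simps = lin_ext_add lin_ext_diff lin_ext_neg lin_ext_scale lin_ext_zero lin_ext_bvec

lemma bilin_ext_add_left:
  "bilin_ext B K (\<lambda>p. f p + f' p) g = (\<lambda>c. bilin_ext B K f g c + bilin_ext B K f' g c)"
  by (simp add: bilin_ext_def fun_eq_iff sum.distrib algebra_simps)

lemma bilin_ext_add_right:
  "bilin_ext B K f (\<lambda>p. g p + g' p) = (\<lambda>c. bilin_ext B K f g c + bilin_ext B K f g' c)"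
  by (simp add: bilin_ext_def fun_eq_iff sum.distrib algebra_simps)

lemma bilin_ext_diff_left:
  "bilin_ext B K (\<lambda>p. f p - f' p) g = (\<lambda>c. bilin_ext B K f g c - bilin_ext B K f' g c)"
  by (simp add: bilin_ext_def fun_eq_iff sum_subtractf algebra_simps)

lemma bilin_ext_diff_right:
  "bilin_ext B K f (\<lambda>p. g p - g' p) = (\<lambda>c. bilin_ext B K f g c - bilin_ext B K f g' c)"
  by (simp add: bilin_ext_def fun_eq_iff sum_subtractf algebra_simps)

lemma bilin_ext_neg_left: "bilin_ext B K (\<lambda>p. - f p) g = (\<lambda>c. - bilin_ext B K f g c)"
  by (simp add: bilin_ext_def fun_eq_iff sum_negf)

lemma bilin_ext_neg_right: "bilin_ext B K f (\<lambda>p. - g p) = (\<lambda>c. - bilin_ext B K f g c)"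
  by (simp add: bilin_ext_def fun_eq_iff sum_negf)

lemma bilin_ext_scale_left: "bilin_ext B K (\<lambda>p. a * f p) g = (\<lambda>c. a * bilin_ext B K f g c)"
  by (simp add: bilin_ext_def fun_eq_iff sum_distrib_left algebra_simps)

lemma bilin_ext_scale_right: "bilin_ext B K f (\<lambda>p. a * g p) = (\<lambda>c. a * bilin_ext B K f g c)"
  by (simp add: bilin_ext_def fun_eq_iff sum_distrib_left algebra_simps)

lemma bilin_ext_zero_left: "bilin_ext B K (\<lambda>p. 0) g = (\<lambda>c. 0)"
  by (simp add: bilin_ext_def)

lemma bilin_ext_zero_right: "bilin_ext B K f (\<lambda>p. 0) = (\<lambda>c. 0)"
  by (simp add: bilin_ext_def)

lemma bilin_ext_bvec: "finite B \<Longrightarrow> x \<in> B \<Longrightarrow> y \<in> B \<Longrightarrow> bilin_ext B K (bvec x) (bvec y) = K x y"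
  by (simp add: bilin_ext_def fun_eq_iff mult.assoc sum_distrib_left[symmetric] sum_bvec_mult)

lemmas bilin_ext_simps = bilin_ext_add_left bilin_ext_add_right bilin_ext_diff_left
  bilin_ext_diff_right bilin_ext_neg_left bilin_ext_neg_right bilin_ext_scale_left
  bilin_ext_scale_right bilin_ext_zero_left bilin_ext_zero_right bilin_ext_bvec

lemma lin_ext_cong: "(\<And>b. b \<in> B \<Longrightarrow> K b = K' b) \<Longrightarrow> lin_ext B K f = lin_ext B K' f"
  by (simp add: lin_ext_def)

lemma bilin_ext_cong:
  "(\<And>x y. x \<in> B \<Longrightarrow> y \<in> B \<Longrightarrow> K x y = K' x y) \<Longrightarrow> bilin_ext B K f g = bilin_ext B K' f g"
  by (simp add: bilin_ext_def)

lemma bvec_sym: "bvec b x = bvec x b"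
  by (simp add: bvec_def eq_commute)

lemma lin_ext_bvec_eq: "finite B \<Longrightarrow> f \<in> vsp B \<Longrightarrow> lin_ext B bvec f = f"
  by (auto simp: lin_ext_def vsp_def fun_eq_iff mult.commute[of "f _"] bvec_sym[of _ x for x]
      sum_bvec_mult)

lemma lin_ext_in_vsp: "(\<And>b. b \<in> B \<Longrightarrow> K b \<in> vsp C) \<Longrightarrow> lin_ext B K f \<in> vsp C"
  by (auto simp: lin_ext_def vsp_def intro!: sum.neutral)

lemma bilin_ext_in_vsp: "(\<And>x y. x \<in> B \<Longrightarrow> y \<in> B \<Longrightarrow> K x y \<in> vsp C) \<Longrightarrow> bilin_ext B K f g \<in> vsp C"
  by (auto simp: bilin_ext_def vsp_def intro!: sum.neutral)

lemma linear_on_lin_ext: "(\<And>b. b \<in> B \<Longrightarrow> K b \<in> vsp C) \<Longrightarrow> linear_on B C (lin_ext B K)"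
  unfolding linear_on_def by (simp add: lin_ext_in_vsp lin_ext_add lin_ext_scale)

lemma linear_on_bilin_ext_left:
  "(\<And>x y. x \<in> B \<Longrightarrow> y \<in> B \<Longrightarrow> K x y \<in> vsp B) \<Longrightarrow> linear_on B B (\<lambda>f. bilin_ext B K f g)"
  unfolding linear_on_def by (simp add: bilin_ext_in_vsp bilin_ext_add_left bilin_ext_scale_left)

lemma linear_on_bilin_ext_right:
  "(\<And>x y. x \<in> B \<Longrightarrow> y \<in> B \<Longrightarrow> K x y \<in> vsp B) \<Longrightarrow> linear_on B B (\<lambda>g. bilin_ext B K f g)"
  unfolding linear_on_def by (simp add: bilin_ext_in_vsp bilin_ext_add_right bilin_ext_scale_right)

lemma lin_ext_lin_ext: "lin_ext C K (lin_ext B K' f) = lin_ext B (\<lambda>d. lin_ext C K (K' d)) f"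
  unfolding lin_ext_def fun_eq_iff sum_distrib_right sum_distrib_left mult.assoc
  by (intro allI sum.swap)

lemma lin_ext_bilin_ext:
  "lin_ext C K (bilin_ext B M f g) = bilin_ext B (\<lambda>x y. lin_ext C K (M x y)) f g"
proof -
  have "(\<Sum>d\<in>C. (\<Sum>x\<in>B. \<Sum>y\<in>B. f x * g y * M x y d) * K d c) =
        (\<Sum>x\<in>B. \<Sum>y\<in>B. f x * g y * (\<Sum>d\<in>C. M x y d * K d c))" for c
  proof -
    have "(\<Sum>d\<in>C. (\<Sum>x\<in>B. \<Sum>y\<in>B. f x * g y * M x y d) * K d c) =
          (\<Sum>x\<in>B. \<Sum>d\<in>C. \<Sum>y\<in>B. f x * g y * M x y d * K d c)"
      by (simp add: sum_distrib_right sum.swap[of _ C])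
    also have "\<dots> = (\<Sum>x\<in>B. \<Sum>y\<in>B. \<Sum>d\<in>C. f x * g y * M x y d * K d c)"
      by (rule sum.cong[OF refl], rule sum.swap)
    finally show ?thesis
      by (simp add: sum_distrib_left mult.assoc)
  qed
  then show ?thesis by (simp add: lin_ext_def bilin_ext_def fun_eq_iff)
qed

lemma bilin_ext_lin_ext:
  "bilin_ext C N (lin_ext B K f) (lin_ext B K' g)
    = bilin_ext B (\<lambda>x y. bilin_ext C N (K x) (K' y)) f g"
proof -
  have "(\<Sum>u\<in>C. \<Sum>v\<in>C. (\<Sum>x\<in>B. f x * K x u) * (\<Sum>y\<in>B. g y * K' y v) * N u v c) =
        (\<Sum>x\<in>B. \<Sum>y\<in>B. f x * g y * (\<Sum>u\<in>C. \<Sum>v\<in>C. K x u * K' y v * N u v c))" for c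
  proof -
    let ?t = "\<lambda>u v x y. f x * g y * (K x u * K' y v * N u v c)"
    have "(\<Sum>u\<in>C. \<Sum>v\<in>C. (\<Sum>x\<in>B. f x * K x u) * (\<Sum>y\<in>B. g y * K' y v) * N u v c) =
          (\<Sum>u\<in>C. \<Sum>v\<in>C. \<Sum>y\<in>B. \<Sum>x\<in>B. ?t u v x y)"
      by (simp add: sum_distrib_right sum_distrib_left mult_ac)
    also have "\<dots> = (\<Sum>u\<in>C. \<Sum>x\<in>B. \<Sum>v\<in>C. \<Sum>y\<in>B. ?t u v x y)"
      by (rule sum.cong[OF refl], subst sum.swap, rule sum.cong[OF refl], rule sum.swap)
    also have "\<dots> = (\<Sum>x\<in>B. \<Sum>y\<in>B. \<Sum>u\<in>C. \<Sum>v\<in>C. ?t u v x y)"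
      by (subst sum.swap, rule sum.cong[OF refl], subst sum.swap, rule sum.cong[OF refl],
          rule sum.swap)
    finally show ?thesis
      by (simp add: sum_distrib_left)
  qed
  then show ?thesis by (simp add: lin_ext_def bilin_ext_def fun_eq_iff)
qed

lemma bilin_ext_swap: "bilin_ext B M g f = bilin_ext B (\<lambda>x y. M y x) f g"
  unfolding bilin_ext_def fun_eq_iff by (subst sum.swap) (simp add: mult_ac)

lemma bilin_ext_bvec_left:
  "finite B \<Longrightarrow> x \<in> B \<Longrightarrow> bilin_ext B M (bvec x) g = (\<lambda>c. \<Sum>y\<in>B. g y * M x y c)"
  by (simp add: bilin_ext_def fun_eq_iff mult.assoc sum_distrib_left[symmetric] sum_bvec_mult)

lemma bilin_ext_bvec_right:
  "finite B \<Longrightarrow> y \<in> B \<Longrightarrow> bilin_ext B M f (bvec y) = (\<lambda>c. \<Sum>x\<in>B. f x * M x y c)"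
  by (simp add: bilin_ext_def fun_eq_iff mult.assoc sum_distrib_left[symmetric] sum_bvec_mult)

lemma bilin_ext_as_lin_ext_left:
  assumes "finite B"
  shows "bilin_ext B M f g = lin_ext B (\<lambda>x. bilin_ext B M (bvec x) g) f"
proof -
  have "lin_ext B (\<lambda>x. bilin_ext B M (bvec x) g) f = lin_ext B (\<lambda>x c. \<Sum>y\<in>B. g y * M x y c) f"
    by (rule lin_ext_cong) (simp add: bilin_ext_bvec_left assms)
  then show ?thesis by (simp add: lin_ext_def bilin_ext_def sum_distrib_left mult_ac fun_eq_iff)
qed

lemma bilin_ext_as_lin_ext_right:
  assumes "finite B"
  shows "bilin_ext B M f g = lin_ext B (\<lambda>y. bilin_ext B M f (bvec y)) g"
proof -
  have "lin_ext B (\<lambda>y. bilin_ext B M f (bvec y)) g = lin_ext B (\<lambda>y c. \<Sum>x\<in>B. f x * M x y c) g"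
    by (rule lin_ext_cong) (simp add: bilin_ext_bvec_right assms)
  then show ?thesis
    unfolding lin_ext_def bilin_ext_def fun_eq_iff sum_distrib_left
    by (intro allI, subst sum.swap) (simp add: mult_ac)
qed

lemma bilin_ext_lin_ext_rotate:
  "bilin_ext B (\<lambda>x y. lin_ext B (A x y) h) f g = bilin_ext B (\<lambda>y z. lin_ext B (\<lambda>x. A x y z) f) g h"
proof -
  have expand: "(\<Sum>x\<in>B. \<Sum>y\<in>B. f x * g y * (\<Sum>z\<in>B. h z * A x y z c)) =
        (\<Sum>y\<in>B. \<Sum>z\<in>B. g y * h z * (\<Sum>x\<in>B. f x * A x y z c))" for c
  proof -
    have "(\<Sum>x\<in>B. \<Sum>y\<in>B. f x * g y * (\<Sum>z\<in>B. h z * A x y z c)) =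
          (\<Sum>x\<in>B. \<Sum>y\<in>B. \<Sum>z\<in>B. f x * g y * h z * A x y z c)"
      by (simp add: sum_distrib_left mult_ac)
    also have "\<dots> = (\<Sum>y\<in>B. \<Sum>z\<in>B. \<Sum>x\<in>B. f x * g y * h z * A x y z c)"
      by (subst sum.swap, rule sum.cong[OF refl], rule sum.swap)
    also have "\<dots> = (\<Sum>y\<in>B. \<Sum>z\<in>B. g y * h z * (\<Sum>x\<in>B. f x * A x y z c))"
      by (simp add: sum_distrib_left mult_ac)
    finally show ?thesis .
  qed
  show ?thesis
    by (intro ext) (simp only: lin_ext_def bilin_ext_def expand)
qed

lemma bilin_ext_assoc:
  assumes B: "finite B"
    and assoc_basis: "\<And>x y z. x \<in> B \<Longrightarrow> y \<in> B \<Longrightarrow> z \<in> B \<Longrightarrow>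
      bilin_ext B M (M x y) (bvec z) = bilin_ext B M (bvec x) (M y z)"
  shows "bilin_ext B M (bilin_ext B M f g) h = bilin_ext B M f (bilin_ext B M g h)"
proof -
  note left = bilin_ext_as_lin_ext_left[OF B] and right = bilin_ext_as_lin_ext_right[OF B]
  have "bilin_ext B M (bilin_ext B M f g) h
      = lin_ext B (\<lambda>u. bilin_ext B M (bvec u) h) (bilin_ext B M f g)"
    by (rule left)
  also have "\<dots> = bilin_ext B (\<lambda>x y. bilin_ext B M (M x y) h) f g"
    unfolding lin_ext_bilin_ext by (rule bilin_ext_cong) (rule left[symmetric])
  also have "\<dots> = bilin_ext B (\<lambda>x y. lin_ext B (\<lambda>z. bilin_ext B M (M x y) (bvec z)) h) f g"
    by (rule bilin_ext_cong) (rule right)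
  also have "\<dots> = bilin_ext B (\<lambda>y z. lin_ext B (\<lambda>x. bilin_ext B M (bvec x) (M y z)) f) g h"
    by (rule trans[OF bilin_ext_lin_ext_rotate], rule bilin_ext_cong, rule lin_ext_cong)
      (simp add: assoc_basis)
  also have "\<dots> = bilin_ext B (\<lambda>y z. bilin_ext B M f (M y z)) g h"
    by (rule bilin_ext_cong) (rule left[symmetric])
  also have "\<dots> = lin_ext B (\<lambda>v. bilin_ext B M f (bvec v)) (bilin_ext B M g h)"
    unfolding lin_ext_bilin_ext by (rule bilin_ext_cong) (rule right)
  also have "\<dots> = bilin_ext B M f (bilin_ext B M g h)"
    by (rule right[symmetric])
  finally show ?thesis .
qed

lemma bilin_ext_unit_left:
  assumes "finite B" "f \<in> vsp B" and unit: "\<And>y. y \<in> B \<Longrightarrow> bilin_ext B M e (bvec y) = bvec y"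
  shows "bilin_ext B M e f = f"
proof -
  have "bilin_ext B M e f = lin_ext B bvec f"
    by (subst bilin_ext_as_lin_ext_right[OF \<open>finite B\<close>]) (intro lin_ext_cong unit)
  then show ?thesis using assms(1,2) by (simp add: lin_ext_bvec_eq)
qed

lemma bilin_ext_unit_right:
  assumes "finite B" "f \<in> vsp B" and unit: "\<And>x. x \<in> B \<Longrightarrow> bilin_ext B M (bvec x) e = bvec x"
  shows "bilin_ext B M f e = f"
proof -
  have "bilin_ext B M f e = lin_ext B bvec f"
    by (subst bilin_ext_as_lin_ext_left[OF \<open>finite B\<close>]) (intro lin_ext_cong unit)
  then show ?thesis using assms(1,2) by (simp add: lin_ext_bvec_eq)
qed

lemma lin_ext_bilin_ext_hom:
  assumes "\<And>x y. x \<in> B \<Longrightarrow> y \<in> B \<Longrightarrow> lin_ext B D (M x y) = bilin_ext C N (D x) (D y)"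
  shows "lin_ext B D (bilin_ext B M f g) = bilin_ext C N (lin_ext B D f) (lin_ext B D g)"
  unfolding lin_ext_bilin_ext bilin_ext_lin_ext by (intro bilin_ext_cong assms)

lemma lin_ext_bilin_ext_antihom:
  assumes "\<And>x y. x \<in> B \<Longrightarrow> y \<in> B \<Longrightarrow> lin_ext B T (M x y) = bilin_ext B M (T y) (T x)"
  shows "lin_ext B T (bilin_ext B M f g) = bilin_ext B M (lin_ext B T g) (lin_ext B T f)"
  unfolding lin_ext_bilin_ext bilin_ext_lin_ext bilin_ext_swap[of B _ g f]
  by (intro bilin_ext_cong assms)

lemma sum_mult_lin_ext_left:
  "(\<lambda>c. \<Sum>b\<in>A. e b * lin_ext C K h (b, c)) = lin_ext C (\<lambda>d c. \<Sum>b\<in>A. e b * K d (b, c)) h"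
  unfolding lin_ext_def fun_eq_iff sum_distrib_left
  by (intro allI, subst sum.swap) (simp add: mult_ac)

lemma sum_mult_lin_ext_right:
  "(\<lambda>c. \<Sum>b\<in>A. lin_ext C K h (c, b) * e b) = lin_ext C (\<lambda>d c. \<Sum>b\<in>A. K d (c, b) * e b) h"
  unfolding lin_ext_def fun_eq_iff sum_distrib_left sum_distrib_right
  by (intro allI, subst sum.swap) (simp add: mult_ac)

lemma sum_bilin_ext_mult:
  "(\<Sum>c\<in>C. bilin_ext B M f g c * e c) = (\<Sum>x\<in>B. \<Sum>y\<in>B. f x * g y * (\<Sum>c\<in>C. M x y c * e c))"
  unfolding bilin_ext_def sum_distrib_left sum_distrib_right
  by (subst sum.swap, rule sum.cong[OF refl], subst sum.swap) (simp add: mult_ac)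

lemma sum_mult_bvec_pair_left:
  "finite A \<Longrightarrow>
    (\<Sum>b\<in>A. e b * bvec (u, v) (b, c)) = (if u \<in> A then e u * bvec v c else (0::'k::comm_ring_1))"
  by (simp add: bvec_pair mult.left_commute[of "e _"] sum_distrib_left[symmetric] sum_bvec_mult)

lemma sum_mult_bvec_pair_right:
  "finite A \<Longrightarrow>
    (\<Sum>b\<in>A. bvec (u, v) (c, b) * e b) = (if v \<in> A then bvec u c * e v else (0::'k::comm_ring_1))"
  by (simp add: bvec_pair mult.assoc sum_distrib_left[symmetric] sum_bvec_mult)

section \<open>Tensor products and convolution on a basis\<close>

lemma tmap_eq_lin_ext:
  "tmap B B2 L M = lin_ext (B \<times> B2) (\<lambda>(b, b2). tprod (L (bvec b)) (M (bvec b2)))"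
  by (simp add: tmap_def lin_ext_def tprod_def fun_eq_iff split_beta mult_ac)

lemma mtens_eq_lin_ext: "mtens B m = lin_ext (B \<times> B) (\<lambda>(x, y). m (bvec x) (bvec y))"
  by (simp add: mtens_def lin_ext_def fun_eq_iff split_beta)

lemma lin_ext_tprod: "lin_ext (B \<times> B) (\<lambda>(x, y). M x y) (tprod f g) = bilin_ext B M f g"
  by (simp add: lin_ext_def bilin_ext_def tprod_def fun_eq_iff sum.cartesian_product' mult_ac)

lemma tmap_lin_ext: "tmap B B2 L M (lin_ext C D h) = lin_ext C (\<lambda>d. tmap B B2 L M (D d)) h"
  by (simp add: tmap_eq_lin_ext lin_ext_lin_ext)

lemma coassoc_lin_ext:
  assumes "\<And>d. d \<in> C \<Longrightarrow> (\<lambda>(x, y, z). tmap B B L M (D d) ((x, y), z)) = tmap B B L' M' (D d)"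
  shows "(\<lambda>(x, y, z). tmap B B L M (lin_ext C D h) ((x, y), z)) = tmap B B L' M' (lin_ext C D h)"
proof -
  have "tmap B B L M (D d) ((x, y), z) = tmap B B L' M' (D d) (x, y, z)" if "d \<in> C" for d x y z
    using fun_cong[OF assms[OF that], of "(x, y, z)"] by simp
  then show ?thesis
    unfolding tmap_lin_ext by (auto simp: lin_ext_def fun_eq_iff intro!: sum.cong)
qed

lemma tens_mult_bilin_ext:
  assumes "finite B"
  shows "tens_mult B (bilin_ext B M) F G
    = bilin_ext (B \<times> B) (\<lambda>(x, x') (y, y'). tprod (M x y) (M x' y')) F G"
proof (rule ext, clarify)
  fix c c'
  have "tens_mult B (bilin_ext B M) F G (c, c') = (\<Sum>p\<in>B \<times> B. \<Sum>p'\<in>B \<times> B.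
      F p * G p' * M (fst p) (fst p') c * M (snd p) (snd p') c')"
    unfolding tens_mult_def split_beta by (intro sum.cong refl) (auto simp: assms bilin_ext_bvec)
  then show "tens_mult B (bilin_ext B M) F G (c, c')
      = bilin_ext (B \<times> B) (\<lambda>(x, x') (y, y'). tprod (M x y) (M x' y')) F G (c, c')"
    by (simp add: bilin_ext_def tprod_def split_beta mult_ac)
qed

definition conv_basis :: "'b set \<Rightarrow> ('b \<Rightarrow> 'b \<Rightarrow> 'b \<Rightarrow> 'k::comm_ring_1) \<Rightarrow> ('b \<Rightarrow> 'b \<times> 'b \<Rightarrow> 'k)
    \<Rightarrow> ('b \<Rightarrow> 'b \<Rightarrow> 'k) \<Rightarrow> ('b \<Rightarrow> 'b \<Rightarrow> 'k) \<Rightarrow> 'b \<Rightarrow> 'b \<Rightarrow> 'k" where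
  "conv_basis B M D F G d = lin_ext (B \<times> B) (\<lambda>(x, y). bilin_ext B M (F x) (G y)) (D d)"

lemma conv_lin_ext:
  assumes B: "finite B"
    and f: "\<And>b. b \<in> B \<Longrightarrow> f (bvec b) = F b" and g: "\<And>b. b \<in> B \<Longrightarrow> g (bvec b) = G b"
  shows "conv B (bilin_ext B M) (lin_ext B D) f g = lin_ext B (conv_basis B M D F G)"
proof
  fix h
  have mtens: "mtens B (bilin_ext B M) = lin_ext (B \<times> B) (\<lambda>(x, y). M x y)"
    unfolding mtens_eq_lin_ext by (intro ext lin_ext_cong) (auto simp: B bilin_ext_bvec)
  have tmap: "tmap B B f g = lin_ext (B \<times> B) (\<lambda>(x, y). tprod (F x) (G y))"
    unfolding tmap_eq_lin_ext by (intro ext lin_ext_cong) (auto simp: f g)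
  show "conv B (bilin_ext B M) (lin_ext B D) f g h = lin_ext B (conv_basis B M D F G) h"
    unfolding conv_def mtens tmap lin_ext_lin_ext conv_basis_def
    by (intro lin_ext_cong) (auto simp: lin_ext_tprod split_beta)
qed


section \<open>Arithmetic of exponents and of q\<close>

lemma zred_0 [simp]: "zred n 0 = 0"
  by (simp add: zred_def)

lemma zred_eq_0_iff [simp]: "zred n e = 0 \<longleftrightarrow> e = 0"
  by (simp add: zred_def)

lemma zred_id: "e \<le> 2 * n \<Longrightarrow> zred n e = e"
  by (cases e) (auto simp: zred_def)

lemma zred_mod: "zred n e mod (2 * n) = e mod (2 * n)"
  by (cases e) (auto simp: zred_def mod_Suc_eq)

lemma zred_cong: "(a = 0 \<longleftrightarrow> b = 0) \<Longrightarrow> a mod (2 * n) = b mod (2 * n) \<Longrightarrow> zred n a = zred n b"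
proof (cases a; cases b)
  fix a' b' assume "a = Suc a'" "b = Suc b'" "a mod (2 * n) = b mod (2 * n)"
  then have "a' mod (2 * n) = b' mod (2 * n)"
    by (metis Zero_not_Suc mod_Suc nat.inject)
  then show "zred n a = zred n b" using \<open>a = Suc a'\<close> \<open>b = Suc b'\<close> by (simp add: zred_def)
qed (simp_all add: zred_def)

lemma zred_add_left [simp]: "zred n (zred n a + b) = zred n (a + b)"
  by (rule zred_cong) (simp, metis mod_add_left_eq zred_mod)

lemma zred_add_right [simp]: "zred n (a + zred n b) = zred n (a + b)"
  by (rule zred_cong) (simp, metis mod_add_right_eq zred_mod)

lemma zred_add_mult_right [simp]: "zred n (a + c * zred n e) = zred n (a + c * e)"
  by (rule zred_cong) (simp, metis mod_add_right_eq mod_mult_right_eq zred_mod)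

lemma zred_mult_right [simp]: "zred n (c * zred n e) = zred n (c * e)"
  using zred_add_mult_right[of n 0 c e] by simp

lemma zred_add_mid [simp]: "zred n (a + zred n b + c) = zred n (a + b + c)"
  by (metis add.assoc add.commute zred_add_right)

lemma zred_add_mid_right [simp]: "zred n (a + (zred n b + c)) = zred n (a + (b + c))"
  by (metis add.assoc add.commute zred_add_right)

lemma zred_add_right_right [simp]: "zred n (a + (b + zred n c)) = zred n (a + (b + c))"
  by (metis add.assoc zred_add_right)

lemma primitive_root_pow_half:
  fixes q :: "'k::idom"
  assumes "1 \<le> n" "q ^ (2 * n) = 1" "\<forall>j. 0 < j \<and> j < 2 * n \<longrightarrow> q ^ j \<noteq> 1"
  shows "q ^ n = -1"
proof -
  have "q ^ n * q ^ n = 1"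
    using assms(2) by (simp add: power_add[symmetric] mult_2)
  then have "(q ^ n - 1) * (q ^ n + 1) = 0"
    by (simp add: algebra_simps)
  moreover have "q ^ n \<noteq> 1" using assms(1,3) by auto
  ultimately show ?thesis by (simp add: eq_neg_iff_add_eq_0)
qed


section \<open>The structure maps of wH_4n on the basis\<close>

fun wH_mult_basis :: "nat \<Rightarrow> 'k::field \<Rightarrow> nat \<times> nat \<Rightarrow> nat \<times> nat \<Rightarrow> nat \<times> nat \<Rightarrow> 'k" where
  "wH_mult_basis n q (i, j) (k, l) =
     (\<lambda>c. (if j + l \<le> 1 then inverse q ^ (j * k) else 0) * bvec (zred n (i + k), j + l) c)"

definition comult_coeff :: "'k::field \<Rightarrow> 'k \<Rightarrow> nat \<Rightarrow> 'k" where
  "comult_coeff q a i = a * (1 - inverse q ^ (2 * i))"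

(* Delta(Z^i) = Z^i (x) Z^i + a (1 - q^(-2i)) Z^(n+i) X (x) Z^i X and
   Delta(Z^i X) = Z^i X (x) Z^i + Z^(n+i) (x) Z^i X:
   closed forms of Delta(Z)^i and Delta(Z)^i Delta(X). *)
fun wH_comult_basis :: "nat \<Rightarrow> 'k::field \<Rightarrow> 'k \<Rightarrow> nat \<times> nat \<Rightarrow> (nat \<times> nat) \<times> (nat \<times> nat) \<Rightarrow> 'k" where
  "wH_comult_basis n q a (i, j) = (if j = 0
     then (\<lambda>p. bvec ((i, 0), (i, 0)) p + comult_coeff q a i * bvec ((zred n (n + i), 1), (i, 1)) p)
     else (\<lambda>p. bvec ((i, 1), (i, 0)) p + bvec ((zred n (n + i), 0), (i, 1)) p))"

fun wH_counit_basis :: "nat \<times> nat \<Rightarrow> 'k::field" where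
  "wH_counit_basis (i, j) = (if j = 0 then 1 else 0)"

(* T(Z^i) = Z^((2n-1) i), the inverse of Z^i in the group Z^1, ..., Z^(2n),
   and T(Z^i X) = T(X) T(Z^i). *)
definition zinv_exp :: "nat \<Rightarrow> nat" where
  "zinv_exp n = 2 * n - 1"

definition antipode_exp :: "nat \<Rightarrow> nat \<Rightarrow> nat" where
  "antipode_exp n i = zred n (zinv_exp n * i)"

fun wH_antipode_basis :: "nat \<Rightarrow> 'k::field \<Rightarrow> nat \<times> nat \<Rightarrow> nat \<times> nat \<Rightarrow> 'k" where
  "wH_antipode_basis n q (i, j) = (if j = 0 then bvec (antipode_exp n i, 0)
     else (\<lambda>c. - (inverse q ^ (zinv_exp n * i)) * bvec (zred n (n + antipode_exp n i), 1) c))"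

definition wH_comult :: "nat \<Rightarrow> 'k::field \<Rightarrow> 'k \<Rightarrow> (nat \<times> nat \<Rightarrow> 'k) \<Rightarrow> (nat \<times> nat) \<times> (nat \<times> nat) \<Rightarrow> 'k"
  where "wH_comult n q a = lin_ext (wH_basis n) (wH_comult_basis n q a)"

definition wH_counit :: "nat \<Rightarrow> (nat \<times> nat \<Rightarrow> 'k::field) \<Rightarrow> 'k" where
  "wH_counit n f = (\<Sum>b\<in>wH_basis n. f b * wH_counit_basis b)"

definition wH_antipode :: "nat \<Rightarrow> 'k::field \<Rightarrow> (nat \<times> nat \<Rightarrow> 'k) \<Rightarrow> nat \<times> nat \<Rightarrow> 'k" where
  "wH_antipode n q = lin_ext (wH_basis n) (wH_antipode_basis n q)"

(* The values of T * id and id * T on the basis: Z^i T(Z^i) = Z^(2n) for i > 0,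
   and (id * T)(X) = X T(1) + Z^n T(X) = X - Z^(2n) X. *)
definition idem_exp :: "nat \<Rightarrow> nat \<Rightarrow> nat" where
  "idem_exp n i = (if i = 0 then 0 else 2 * n)"

fun wH_antipode_conv_id_basis :: "nat \<Rightarrow> nat \<times> nat \<Rightarrow> nat \<times> nat \<Rightarrow> 'k::field" where
  "wH_antipode_conv_id_basis n (i, j) = (if j = 0 then bvec (idem_exp n i, 0) else (\<lambda>c. 0))"

fun wH_id_conv_antipode_basis :: "nat \<Rightarrow> nat \<times> nat \<Rightarrow> nat \<times> nat \<Rightarrow> 'k::field" where
  "wH_id_conv_antipode_basis n (i, j) = (if j = 0 then bvec (idem_exp n i, 0)
     else if i = 0 then (\<lambda>c. bvec (0, 1) c - bvec (2 * n, 1) c) else (\<lambda>c. 0))"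

lemma mem_wH_basis [simp]: "(i, j) \<in> wH_basis n \<longleftrightarrow> i \<le> 2 * n \<and> j \<le> 1"
  by (auto simp: wH_basis_def)

lemma finite_wH_basis [simp]: "finite (wH_basis n)"
  by (simp add: wH_basis_def)

lemma wH_basis_cases:
  assumes "x \<in> wH_basis n"
  obtains i where "x = (i, 0)" "i \<le> 2 * n" | i where "x = (i, 1)" "i \<le> 2 * n"
  using assms by (cases x) (auto simp: le_Suc_eq)

lemma wH_mult_eq_bilin_ext: "wH_mult n q = bilin_ext (wH_basis n) (wH_mult_basis n q)"
  unfolding wH_mult_def bilin_ext_def fun_eq_iff
  by (auto simp: bvec_def split_beta intro!: sum.cong)

locale wH_param =
  fixes n :: nat and q a :: "'k::field"
  assumes n_pos: "1 \<le> n" and q_pow_n: "q ^ n = -1"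
begin

abbreviation "B \<equiv> wH_basis n"
abbreviation "M \<equiv> wH_mult_basis n q"
abbreviation "D \<equiv> wH_comult_basis n q a"
abbreviation "E \<equiv> wH_counit_basis :: nat \<times> nat \<Rightarrow> 'k"
abbreviation "T \<equiv> wH_antipode_basis n q"
abbreviation "m \<equiv> wH_mult n q"
abbreviation "u \<equiv> bvec (0, 0) :: nat \<times> nat \<Rightarrow> 'k"
abbreviation "Z \<equiv> bvec (1, 0) :: nat \<times> nat \<Rightarrow> 'k"
abbreviation "X \<equiv> bvec (0, 1) :: nat \<times> nat \<Rightarrow> 'k"
abbreviation "pw \<equiv> apow m u"

lemma q_nonzero: "q \<noteq> 0"
  using q_pow_n n_pos by (cases n) auto

lemma inverse_q_pow_n: "inverse q ^ n = -1"
  using q_pow_n by (simp add: power_inverse)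

lemma inverse_q_pow_2n [simp]: "inverse q ^ (2 * n) = 1"
  by (simp add: mult.commute[of 2] power_mult inverse_q_pow_n)

lemma inverse_q_pow_mod: "inverse q ^ e = inverse q ^ (e mod (2 * n))"
proof -
  have "inverse q ^ e = (inverse q ^ (2 * n)) ^ (e div (2 * n)) * inverse q ^ (e mod (2 * n))"
    by (simp only: power_mult[symmetric] power_add[symmetric] mult_div_mod_eq)
  then show ?thesis by simp
qed

lemma inverse_q_pow_cong: "e mod (2 * n) = e' mod (2 * n) \<Longrightarrow> inverse q ^ e = inverse q ^ e'"
  by (metis inverse_q_pow_mod)

lemma inverse_q_pow_zred [simp]: "inverse q ^ zred n e = inverse q ^ e"
  by (rule inverse_q_pow_cong) (simp add: zred_mod)

lemma inverse_q_pow_mult_zred [simp]: "inverse q ^ (c * zred n e) = inverse q ^ (c * e)"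
  by (rule inverse_q_pow_cong) (metis mod_mult_right_eq zred_mod)

lemma inverse_q_pow_antipode: "inverse q ^ (zinv_exp n * k) * inverse q ^ k = 1"
proof -
  have "zinv_exp n * k + k = 2 * n * k" using n_pos by (simp add: zinv_exp_def algebra_simps)
  then show ?thesis by (metis power_add power_mult inverse_q_pow_2n power_one)
qed

lemma zred_le [simp]: "zred n e \<le> 2 * n"
  using n_pos by (simp add: zred_def Suc_leI)

lemma antipode_exp_0 [simp]: "antipode_exp n 0 = 0"
  by (simp add: antipode_exp_def)

lemma antipode_exp_le [simp]: "antipode_exp n i \<le> 2 * n"
  by (simp add: antipode_exp_def)

lemma idem_exp_le [simp]: "idem_exp n i \<le> 2 * n"
  by (simp add: idem_exp_def)

lemma comult_coeff_0 [simp]: "comult_coeff q a 0 = 0"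
  by (simp add: comult_coeff_def)

lemma comult_coeff_zred [simp]: "comult_coeff q a (zred n e) = comult_coeff q a e"
  by (simp add: comult_coeff_def)

lemma comult_coeff_add:
  "comult_coeff q a (i + k)
    = comult_coeff q a k + comult_coeff q a i * inverse q ^ k * inverse q ^ k"
proof -
  have "inverse q ^ (2 * (i + k)) = inverse q ^ (2 * i) * inverse q ^ (2 * k)"
    by (simp add: power_add distrib_left)
  moreover have "inverse q ^ (2 * k) = inverse q ^ k * inverse q ^ k"
    by (simp add: mult_2 power_add)
  ultimately show ?thesis by (simp add: comult_coeff_def algebra_simps)
qed

lemma comult_coeff_n_add: "comult_coeff q a (n + i) = comult_coeff q a i"
  by (simp add: comult_coeff_def distrib_left power_add)

lemma zred_n_add_n_add: "i \<le> 2 * n \<Longrightarrow> zred n (n + (n + i)) = (if i = 0 then 2 * n else i)"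
proof (cases "i = 0")
  case False
  assume "i \<le> 2 * n"
  have "zred n (n + (n + i)) = zred n i"
    by (rule zred_cong) (use False in \<open>simp_all add: mult_2 add.assoc[symmetric]\<close>)
  then show ?thesis using False \<open>i \<le> 2 * n\<close> by (simp add: zred_id)
qed (simp add: zred_id mult_2)

lemma zred_2n_mult: "zred n (2 * n * i) = idem_exp n i"
proof (cases "i = 0")
  case False
  have "zred n (2 * n * i) = zred n (2 * n)"
    by (rule zred_cong) (use False n_pos in auto)
  then show ?thesis using False by (simp add: zred_id idem_exp_def)
qed (simp add: idem_exp_def)

lemma zred_n_add_2n_mult: "zred n (n + 2 * n * t) = n"
proof -
  have "zred n (n + 2 * n * t) = zred n n" by (rule zred_cong) (use n_pos in auto)
  then show ?thesis by (simp add: zred_id)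
qed

lemma zred_2n_add: "0 < e \<Longrightarrow> zred n (2 * n + e) = zred n e"
  by (rule zred_cong) auto

lemma zred_3n_add: "zred n (3 * n + e) = zred n (n + e)"
  using zred_2n_add[of "n + e"] n_pos by (simp add: add.assoc[symmetric])

lemma zinv_exp_arith:
  fixes i :: nat
  defines "N \<equiv> zinv_exp n"
  shows "N * i + i = 2 * n * i" "i + N * i = 2 * n * i" "n + N * i + i = n + 2 * n * i"
    "N * (n + i) + i = n + 2 * n * (n - 1 + i)" "n + i + (n + N * i) = 2 * n * Suc i" "0 < N"
    "inverse q ^ (N * i) * inverse q ^ i = 1"
proof -
  obtain m where m: "n = Suc m" using n_pos by (cases n) auto
  show "N * i + i = 2 * n * i" "i + N * i = 2 * n * i" "n + N * i + i = n + 2 * n * i"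
    "N * (n + i) + i = n + 2 * n * (n - 1 + i)" "n + i + (n + N * i) = 2 * n * Suc i" "0 < N"
    unfolding N_def zinv_exp_def m by (simp_all add: algebra_simps)
  show "inverse q ^ (N * i) * inverse q ^ i = 1" unfolding N_def by (rule inverse_q_pow_antipode)
qed

lemma mult_basis_assoc:
  assumes "x \<in> B" "y \<in> B" "z \<in> B"
  shows "bilin_ext B M (M x y) (bvec z) = bilin_ext B M (bvec x) (M y z)"
  using assms by (elim wH_basis_cases) (auto simp: bilin_ext_simps add.assoc power_add fun_eq_iff)

lemma mult_basis_unit_left: "y \<in> B \<Longrightarrow> M (0, 0) y = bvec y"
  by (auto elim!: wH_basis_cases simp: zred_id fun_eq_iff)

lemma mult_basis_unit_right: "x \<in> B \<Longrightarrow> M x (0, 0) = bvec x"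
  by (auto elim!: wH_basis_cases simp: zred_id fun_eq_iff)

lemma comult_basis_mult:
  assumes "x \<in> B" "y \<in> B"
  shows "lin_ext B D (M x y)
    = bilin_ext (B \<times> B) (\<lambda>(x, x') (y, y'). tprod (M x y) (M x' y')) (D x) (D y)"
  using assms
  by (elim wH_basis_cases)
    (simp_all add: bilin_ext_simps lin_ext_simps tprod_def split_beta,
     simp_all add: fun_eq_iff add_ac power_add,
     auto simp: comult_coeff_add inverse_q_pow_n algebra_simps bvec_pair)

lemma counit_basis_left: "d \<in> B \<Longrightarrow> (\<lambda>c. \<Sum>b\<in>B. E b * D d (b, c)) = bvec d"
  by (auto elim!: wH_basis_cases simp: fun_eq_iff distrib_left sum.distrib
      mult.left_commute[of "E _"] sum_distrib_left[symmetric] sum_mult_bvec_pair_left)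

lemma counit_basis_right: "d \<in> B \<Longrightarrow> (\<lambda>c. \<Sum>b\<in>B. D d (c, b) * E b) = bvec d"
  by (auto elim!: wH_basis_cases simp: fun_eq_iff distrib_right sum.distrib mult.assoc
      sum_distrib_left[symmetric] sum_mult_bvec_pair_right)

lemma antipode_basis_mult:
  assumes "x \<in> B" "y \<in> B"
  shows "lin_ext B T (M x y) = bilin_ext B M (T y) (T x)"
proof -
  have cancel: "inverse q ^ k * inverse q ^ (k * zinv_exp n) = 1" for k
    using inverse_q_pow_antipode[of k] by (simp add: mult_ac)
  from assms show ?thesis
    by (elim wH_basis_cases)
      (simp_all add: bilin_ext_simps lin_ext_simps,
       simp_all add: fun_eq_iff antipode_exp_def,
       simp_all add: algebra_simps power_add cancel)
qed

lemma counit_basis_mult: "x \<in> B \<Longrightarrow> y \<in> B \<Longrightarrow> (\<Sum>c\<in>B. M x y c * E c) = E x * E y"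
  by (auto elim!: wH_basis_cases simp: mult.assoc sum_distrib_left[symmetric] sum_bvec_mult)

lemma comult_bvec: "b \<in> B \<Longrightarrow> wH_comult n q a (bvec b) = D b"
  by (simp add: wH_comult_def lin_ext_bvec)

lemma comult_basis_coassoc:
  assumes "d \<in> B"
  shows "(\<lambda>(x, y, z). tmap B B (wH_comult n q a) id (D d) ((x, y), z))
    = tmap B B id (wH_comult n q a) (D d)"
  using assms
  by (elim wH_basis_cases)
    (simp_all add: tmap_eq_lin_ext lin_ext_simps comult_bvec tprod_def,
     simp_all add: fun_eq_iff bvec_pair zred_n_add_n_add comult_coeff_n_add split_beta,
     auto simp: algebra_simps)

lemma antipode_conv_id_basis: "d \<in> B \<Longrightarrow> conv_basis B M D T bvec d = wH_antipode_conv_id_basis n d"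
  unfolding conv_basis_def
  by (elim wH_basis_cases)
    (simp_all add: lin_ext_simps bilin_ext_simps,
     simp_all add: fun_eq_iff antipode_exp_def zinv_exp_arith zred_2n_mult zred_n_add_2n_mult)

lemma id_conv_antipode_basis: "d \<in> B \<Longrightarrow> conv_basis B M D bvec T d = wH_id_conv_antipode_basis n d"
  unfolding conv_basis_def
  by (elim wH_basis_cases)
    (simp_all add: lin_ext_simps bilin_ext_simps,
     simp_all add: fun_eq_iff antipode_exp_def zinv_exp_arith zred_2n_mult zred_n_add_2n_mult,
     auto simp: idem_exp_def zred_2n_add zinv_exp_arith zred_id zred_3n_add zred_2n_mult
       mult_2[symmetric])

lemma antipode_conv_id_conv_antipode_basis:
  "d \<in> B \<Longrightarrow> conv_basis B M D (wH_antipode_conv_id_basis n) T d = T d"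
  unfolding conv_basis_def
  by (elim wH_basis_cases)
    (simp_all add: lin_ext_simps bilin_ext_simps,
     simp_all add: fun_eq_iff antipode_exp_def zinv_exp_arith zred_2n_mult zred_n_add_2n_mult,
     auto simp: idem_exp_def zred_2n_add zinv_exp_arith zred_id zred_3n_add zred_2n_mult
       mult_2[symmetric])

lemma id_conv_antipode_conv_id_basis:
  "d \<in> B \<Longrightarrow> conv_basis B M D (wH_id_conv_antipode_basis n) bvec d = bvec d"
  unfolding conv_basis_def
  by (elim wH_basis_cases)
    (simp_all add: lin_ext_simps bilin_ext_simps,
     simp_all add: fun_eq_iff antipode_exp_def zinv_exp_arith zred_2n_mult zred_n_add_2n_mult,
     auto simp: idem_exp_def zred_2n_add zinv_exp_arith zred_id zred_3n_add zred_2n_mult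
       mult_2[symmetric])

section \<open>Lifting from the basis\<close>

lemma mult_basis_in_vsp: "M x y \<in> vsp B"
  by (cases x; cases y) (auto simp: vsp_def bvec_def)

lemma comult_basis_in_vsp: "d \<in> B \<Longrightarrow> D d \<in> vsp (B \<times> B)"
  by (cases d) (auto simp: vsp_def bvec_def)

lemma antipode_basis_in_vsp: "d \<in> B \<Longrightarrow> T d \<in> vsp B"
  by (cases d) (auto simp: vsp_def bvec_def)

lemma wH_is_algebra: "is_algebra B m u"
proof -
  have unit: "bilin_ext B M u (bvec y) = bvec y" "bilin_ext B M (bvec y) u = bvec y"
    if "y \<in> B" for y
    using that by (simp_all add: bilin_ext_bvec mult_basis_unit_left mult_basis_unit_right)
  show ?thesis
    unfolding is_algebra_def wH_mult_eq_bilin_ext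
  proof (intro conjI ballI)
    show "bilin_ext B M (bilin_ext B M f g) h = bilin_ext B M f (bilin_ext B M g h)" for f g h
      by (rule bilin_ext_assoc[OF finite_wH_basis mult_basis_assoc])
    show "bilin_ext B M u f = f" if "f \<in> vsp B" for f
      using finite_wH_basis that unit(1) by (rule bilin_ext_unit_left)
    show "bilin_ext B M f u = f" if "f \<in> vsp B" for f
      using finite_wH_basis that unit(2) by (rule bilin_ext_unit_right)
  qed (simp_all add: bvec_in_vsp linear_on_bilin_ext_left linear_on_bilin_ext_right
      mult_basis_in_vsp)
qed

lemma counit_bvec: "b \<in> B \<Longrightarrow> wH_counit n (bvec b) = E b"
  by (simp add: wH_counit_def sum_bvec_mult)

lemma wH_counit_linear: "linear_fun B (wH_counit n)"
  unfolding linear_fun_def wH_counit_def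
  by (simp add: sum.distrib distrib_right sum_distrib_left mult.assoc)

lemma wH_comult_counit_left:
  assumes "h \<in> vsp B"
  shows "(\<lambda>c. \<Sum>b\<in>B. wH_counit n (bvec b) * wH_comult n q a h (b, c)) = h"
proof -
  have "(\<lambda>c. \<Sum>b\<in>B. wH_counit n (bvec b) * wH_comult n q a h (b, c))
      = lin_ext B (\<lambda>d c. \<Sum>b\<in>B. E b * D d (b, c)) h"
    unfolding wH_comult_def sum_mult_lin_ext_left[symmetric] by (simp add: counit_bvec)
  also have "\<dots> = lin_ext B bvec h"
    by (intro lin_ext_cong counit_basis_left)
  finally show ?thesis using assms by (simp add: lin_ext_bvec_eq)
qed

lemma wH_comult_counit_right:
  assumes "h \<in> vsp B"
  shows "(\<lambda>c. \<Sum>b\<in>B. wH_comult n q a h (c, b) * wH_counit n (bvec b)) = h"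
proof -
  have "(\<lambda>c. \<Sum>b\<in>B. wH_comult n q a h (c, b) * wH_counit n (bvec b))
      = lin_ext B (\<lambda>d c. \<Sum>b\<in>B. D d (c, b) * E b) h"
    unfolding wH_comult_def sum_mult_lin_ext_right[symmetric] by (simp add: counit_bvec)
  also have "\<dots> = lin_ext B bvec h"
    by (intro lin_ext_cong counit_basis_right)
  finally show ?thesis using assms by (simp add: lin_ext_bvec_eq)
qed

lemma wH_comult_mult:
  "wH_comult n q a (m f g) = tens_mult B m (wH_comult n q a f) (wH_comult n q a g)"
  unfolding wH_comult_def wH_mult_eq_bilin_ext tens_mult_bilin_ext[OF finite_wH_basis]
  by (rule lin_ext_bilin_ext_hom) (rule comult_basis_mult)

lemma wH_counit_mult: "wH_counit n (m f g) = wH_counit n f * wH_counit n g"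
  unfolding wH_counit_def wH_mult_eq_bilin_ext sum_bilin_ext_mult sum_product
  by (intro sum.cong refl) (subst counit_basis_mult; simp add: mult_ac)

lemma wH_is_bialgebra: "is_bialgebra B m u (wH_comult n q a) (wH_counit n)"
  unfolding is_bialgebra_def
proof (intro conjI ballI)
  show "linear_on B (B \<times> B) (wH_comult n q a)"
    unfolding wH_comult_def by (intro linear_on_lin_ext comult_basis_in_vsp)
  show "(\<lambda>(x, y, z). tmap B B (wH_comult n q a) id (wH_comult n q a h) ((x, y), z))
      = tmap B B id (wH_comult n q a) (wH_comult n q a h)" for h
    unfolding wH_comult_def[of n q a, THEN fun_cong, of h]
    by (intro coassoc_lin_ext comult_basis_coassoc)
  show "wH_comult n q a u = tprod u u"
    by (simp add: comult_bvec tprod_bvec)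
  show "wH_counit n u = 1"
    by (simp add: counit_bvec)
qed (simp_all add: wH_is_algebra wH_counit_linear wH_comult_counit_left wH_comult_counit_right
    wH_comult_mult wH_counit_mult)

lemma wH_antipode_conv:
  assumes "\<And>b. b \<in> B \<Longrightarrow> f (bvec b) = F b" "\<And>b. b \<in> B \<Longrightarrow> g (bvec b) = G b"
  shows "conv B m (wH_comult n q a) f g = lin_ext B (conv_basis B M D F G)"
  unfolding wH_mult_eq_bilin_ext wH_comult_def by (intro conv_lin_ext finite_wH_basis assms)

lemma wH_is_weak_hopf: "is_weak_hopf B m u (wH_comult n q a) (wH_counit n) (wH_antipode n q)"
proof -
  let ?conv = "conv B m (wH_comult n q a)"
  have antipode_bvec: "wH_antipode n q (bvec b) = T b" if "b \<in> B" for b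
    using that by (simp add: wH_antipode_def lin_ext_bvec)
  have "?conv (wH_antipode n q) id = lin_ext B (conv_basis B M D T bvec)"
    by (rule wH_antipode_conv) (simp_all add: antipode_bvec)
  also have "\<dots> = lin_ext B (wH_antipode_conv_id_basis n)"
    by (rule ext, rule lin_ext_cong, rule antipode_conv_id_basis)
  finally have "?conv (?conv (wH_antipode n q) id) (wH_antipode n q)
      = lin_ext B (conv_basis B M D (wH_antipode_conv_id_basis n) T)"
    by (intro wH_antipode_conv) (simp_all add: lin_ext_bvec antipode_bvec)
  also have "\<dots> = wH_antipode n q"
    unfolding wH_antipode_def
    by (rule ext, rule lin_ext_cong, rule antipode_conv_id_conv_antipode_basis)
  finally have left: "?conv (?conv (wH_antipode n q) id) (wH_antipode n q) = wH_antipode n q" .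
  have "?conv id (wH_antipode n q) = lin_ext B (conv_basis B M D bvec T)"
    by (rule wH_antipode_conv) (simp_all add: antipode_bvec)
  also have "\<dots> = lin_ext B (wH_id_conv_antipode_basis n)"
    by (rule ext, rule lin_ext_cong, rule id_conv_antipode_basis)
  finally have "?conv (?conv id (wH_antipode n q)) id
      = lin_ext B (conv_basis B M D (wH_id_conv_antipode_basis n) bvec)"
    by (intro wH_antipode_conv) (simp_all add: lin_ext_bvec)
  also have "\<dots> = lin_ext B bvec"
    by (rule ext, rule lin_ext_cong, rule id_conv_antipode_conv_id_basis)
  finally have right: "?conv (?conv id (wH_antipode n q)) id = lin_ext B bvec" .
  have "linear_on B B (wH_antipode n q)"
    unfolding wH_antipode_def by (intro linear_on_lin_ext antipode_basis_in_vsp)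
  then show ?thesis
    unfolding is_weak_hopf_def using wH_is_bialgebra left right by (simp add: lin_ext_bvec_eq)
qed

lemma wH_mult_bvec: "x \<in> B \<Longrightarrow> y \<in> B \<Longrightarrow> m (bvec x) (bvec y) = M x y"
  by (simp add: wH_mult_eq_bilin_ext bilin_ext_bvec)

(* Z = bvec (1, 0) is not in simp normal form (simp rewrites 1 to Suc 0),
   so this equation is used by unfolding rather than by simp. *)
lemma pw_Z: "pw Z k = bvec (zred n k, 0)"
proof (induction k)
  case (Suc k)
  have "pw Z (Suc k) = M (1, 0) (zred n k, 0)"
    using Suc n_pos by (simp add: wH_mult_bvec)
  also have "\<dots> = bvec (zred n (Suc k), 0)"
    using zred_add_right[of n 1 k] by (simp add: fun_eq_iff)
  finally show ?case .
qed simp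

lemma monomial_eq_bvec: "(i, j) \<in> B \<Longrightarrow> m (pw Z i) (pw X j) = bvec (i, j)"
  unfolding pw_Z by (auto simp: le_Suc_eq zred_id wH_mult_bvec fun_eq_iff)

lemma wH_basis_expansion: "h \<in> vsp B \<Longrightarrow> h = (\<lambda>c. \<Sum>(i, j)\<in>B. h (i, j) * m (pw Z i) (pw X j) c)"
proof -
  assume "h \<in> vsp B"
  then have "h = lin_ext B bvec h" by (simp add: lin_ext_bvec_eq)
  also have "\<dots> = (\<lambda>c. \<Sum>(i, j)\<in>B. h (i, j) * m (pw Z i) (pw X j) c)"
    unfolding lin_ext_def
  proof (intro ext sum.cong refl)
    fix c x assume "x \<in> B"
    then obtain i j where "x = (i, j)" "(i, j) \<in> B" by (cases x) auto
    then show "h x * bvec x c = (case x of (i, j) \<Rightarrow> h (i, j) * m (pw Z i) (pw X j) c)"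
      by (simp only: prod.case monomial_eq_bvec)
  qed
  finally show ?thesis .
qed

lemma Z_pow_2n_Suc: "pw Z (2 * n + 1) = Z"
  unfolding pw_Z by (simp add: zred_def)

lemma Z_X_commute: "m Z X = (\<lambda>c. q * m X Z c)"
  using n_pos q_nonzero by (simp add: wH_mult_bvec fun_eq_iff)

lemma X_square: "m X X = (\<lambda>c. 0)"
  by (simp add: wH_mult_bvec fun_eq_iff)

lemma wH_noncommutative:
  assumes "q \<noteq> 1"
  shows "\<exists>f\<in>vsp B. \<exists>g\<in>vsp B. m f g \<noteq> m g f"
proof (intro bexI)
  have "m Z X = M (1, 0) (0, 1)" "m X Z = M (0, 1) (1, 0)"
    using n_pos by (simp_all add: wH_mult_bvec)
  then have "m Z X (1, 1) = 1" "m X Z (1, 1) = inverse q"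
    using n_pos by (simp_all add: zred_id bvec_def)
  moreover have "inverse q \<noteq> 1" using assms by (metis inverse_1 inverse_inverse_eq)
  ultimately show "m Z X \<noteq> m X Z" by auto
qed (use n_pos in \<open>auto intro: bvec_in_vsp\<close>)

lemma comult_Z: "wH_comult n q a Z = (\<lambda>p. tprod Z Z p
    + a * (1 - inverse (q ^ 2)) * tprod (m (pw Z (n + 1)) X) (m Z X) p)"
proof -
  have "m (pw Z (n + 1)) X = bvec (zred n (n + 1), 1)" "m Z X = bvec (1, 1)"
    unfolding pw_Z using n_pos by (simp_all add: wH_mult_bvec zred_id fun_eq_iff)
  then show ?thesis
    using n_pos by (simp add: comult_bvec tprod_bvec comult_coeff_def power_inverse)
qed

lemma comult_X: "wH_comult n q a X = (\<lambda>p. tprod X u p + tprod (pw Z n) X p)"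
  unfolding pw_Z using n_pos by (simp add: comult_bvec tprod_bvec zred_id)

lemma counit_Z: "wH_counit n Z = 1" and counit_X: "wH_counit n X = 0"
  using n_pos by (simp_all add: counit_bvec)

lemma antipode_Z: "wH_antipode n q Z = pw Z (2 * n - 1)"
  unfolding pw_Z using n_pos
  by (simp add: wH_antipode_def lin_ext_bvec antipode_exp_def zinv_exp_def)

lemma antipode_X: "wH_antipode n q X = (\<lambda>c. - m (pw Z n) X c)"
  unfolding pw_Z using n_pos
  by (simp add: wH_antipode_def lin_ext_bvec wH_mult_bvec zred_id fun_eq_iff)

lemma antipode_unit: "wH_antipode n q u = u"
  by (simp add: wH_antipode_def lin_ext_bvec)

lemma antipode_antihom: "wH_antipode n q (m f g) = m (wH_antipode n q g) (wH_antipode n q f)"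
  unfolding wH_antipode_def wH_mult_eq_bilin_ext
  by (rule lin_ext_bilin_ext_antihom) (rule antipode_basis_mult)

lemma wH_noncocommutative: "\<exists>h\<in>vsp B. (\<lambda>(x, y). wH_comult n q a h (y, x)) \<noteq> wH_comult n q a h"
proof
  have "wH_comult n q a X = D (0, 1)"
    by (simp add: comult_bvec)
  then have "wH_comult n q a X ((0, 1), (0, 0)) = 1" "wH_comult n q a X ((0, 0), (0, 1)) = 0"
    using n_pos by (simp_all add: bvec_def zred_id)
  then show "(\<lambda>(x, y). wH_comult n q a X (y, x)) \<noteq> wH_comult n q a X"
    by (metis (mono_tags) case_prod_conv zero_neq_one)
qed (simp add: bvec_in_vsp)

end

theorem theorem3p1:
  fixes n :: nat and q a :: "'k::field_char_0"
  assumes alg_closed: "\<forall>p :: 'k poly. degree p > 0 \<longrightarrow> (\<exists>x. poly p x = 0)"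
    and n_pos: "n \<ge> 1"
    and q_root: "q ^ (2 * n) = 1"
    and q_prim: "\<forall>j. 0 < j \<and> j < 2 * n \<longrightarrow> q ^ j \<noteq> 1"
    and a_nz: "a \<noteq> 0"
  shows
    "let B = wH_basis n; m = wH_mult n q; u = bvec (0, 0);
         Z = bvec (1, 0); X = bvec (0, 1); pw = apow m u
     in is_algebra B m u \<and> Z \<in> vsp B \<and> X \<in> vsp B
      \<comment> \<open>defining relations, and Z^i X^j (i <= 2n, j <= 1) is a basis\<close>
      \<and> pw Z (2 * n + 1) = Z \<and> m Z X = (\<lambda>c. q * m X Z c) \<and> m X X = (\<lambda>c. 0)
      \<and> (\<forall>h\<in>vsp B. h = (\<lambda>c. \<Sum>(i, j)\<in>B. h (i, j) * m (pw Z i) (pw X j) c))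
      \<comment> \<open>noncommutative\<close>
      \<and> (\<exists>f\<in>vsp B. \<exists>g\<in>vsp B. m f g \<noteq> m g f)
      \<and> (\<exists>\<Delta> \<epsilon> T. is_weak_hopf B m u \<Delta> \<epsilon> T
          \<and> \<Delta> Z = (\<lambda>p. tprod Z Z p
                 + a * (1 - inverse (q ^ 2)) * tprod (m (pw Z (n + 1)) X) (m Z X) p)
          \<and> \<Delta> X = (\<lambda>p. tprod X u p + tprod (pw Z n) X p)
          \<and> \<epsilon> Z = 1 \<and> \<epsilon> X = 0
          \<and> T Z = pw Z (2 * n - 1) \<and> T X = (\<lambda>c. - m (pw Z n) X c)
          \<and> (\<forall>f\<in>vsp B. \<forall>g\<in>vsp B. T (m f g) = m (T g) (T f)) \<and> T u = u
          \<comment> \<open>noncocommutative\<close>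
          \<and> (\<exists>h\<in>vsp B. (\<lambda>(x, y). \<Delta> h (y, x)) \<noteq> \<Delta> h))"
proof -
  interpret wH_param n q a
    using n_pos primitive_root_pow_half[OF n_pos q_root q_prim] by unfold_locales
  have "q \<noteq> 1"
    using q_prim n_pos by auto
  then show ?thesis
    unfolding Let_def
    by (intro conjI ballI exI[of _ "wH_comult n q a"] exI[of _ "wH_counit n"]
          exI[of _ "wH_antipode n q"] wH_is_algebra bvec_in_vsp Z_pow_2n_Suc Z_X_commute X_square
          wH_basis_expansion wH_noncommutative wH_is_weak_hopf comult_Z comult_X counit_Z counit_X
          antipode_Z antipode_X antipode_antihom antipode_unit wH_noncocommutative)
       (use n_pos in auto)
qed

end
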